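(* Let $d\ge2$, $b\ge1$ be integers and $\gamma,\nu>0$. Consider the $(d+1)\times(d+1)$ matrix $A^Q$ indexed by $0,1,\dots,d$ with $A^Q_{j,j}=-\nu$ for all $j$, $A^Q_{k,k-1}=\gamma$ for $1\le k\le d-1$, $A^Q_{d,d-1}=b\gamma$, and all other entries $0$; let $B^Q=\mathbf{e}_0$, and let $W(t)$ solve $\dot W=A^QW+W(A^Q)^T+B^Q(B^Q)^T$, $W(0)=0$. Let $V_{j,k}(s)$ denote the Laplace transform of $W_{j,k}(t)$. Then (i) for $0\le j,k\le d-1$: $V_{j,k}(s)=\dfrac{1}{s(s+2\nu)}\left(\dfrac{\gamma}{s+2\nu}\right)^{j+k}\dbinom{j+k}{k}$, equivalently $W_{j,k}(t)=\dfrac{1}{2\nu}\left(\dfrac{\gamma}{2\nu}\right)^{j+k}\dbinom{j+k}{k}\left[1-e^{-2\nu t}\sum_{\ell=0}^{j+k}\dfrac{(2\nu t)^\ell}{\ell!}\right]$; (ii) for $0\le j\le d-1$: $V_{d,j}(s)=V_{j,d}(s)=\dfrac{b}{s(s+2\nu)}\left(\dfrac{\gamma}{s+2\nu}\right)^{d+j}\dbinom{d+j}{d}$; (iii) $V_{d,d}(s)=\dfrac{b^2}{s(s+2\nu)}\left(\dfrac{\gamma}{s+2\nu}\right)^{2d}\dbinom{2d}{d}$.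
   Context: $A^Q$ is the adjacency matrix of a weighted directed path $0\to1\to\cdots\to d$ with uniform self-loop weight $-\nu$, all edge weights $\gamma$ except the last edge $(d-1)\to d$ which has weight $b\gamma$ (this is the quotient of the directed balloon graph). $\mathbf{e}_0$ is the standard basis vector for index $0$. The Laplace transform is $V(s)=\int_0^\infty e^{-st}W(t)\,dt$. *)

theory Defs
  imports "HOL-Analysis.Analysis"
begin

definition AQ :: "nat \<Rightarrow> nat \<Rightarrow> real \<Rightarrow> real \<Rightarrow> nat \<Rightarrow> nat \<Rightarrow> real" where
  "AQ d b \<gamma> \<nu> j k =
     (if j > d \<or> k > d then 0
      else if j = k then - \<nu>
      else if 1 \<le> j \<and> j \<le> d - 1 \<and> k = j - 1 then \<gamma>
      else if j = d \<and> k = d - 1 then real b * \<gamma>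
      else 0)"

definition BBT :: "nat \<Rightarrow> nat \<Rightarrow> real" where
  "BBT j k = (if j = 0 \<and> k = 0 then 1 else 0)"

definition solves_lyap :: "nat \<Rightarrow> nat \<Rightarrow> real \<Rightarrow> real \<Rightarrow> (real \<Rightarrow> nat \<Rightarrow> nat \<Rightarrow> real) \<Rightarrow> bool" where
  "solves_lyap d b \<gamma> \<nu> W \<longleftrightarrow>
     (\<forall>j\<le>d. \<forall>k\<le>d. W 0 j k = 0) \<and>
     (\<forall>t\<ge>0. \<forall>j\<le>d. \<forall>k\<le>d.
        ((\<lambda>\<tau>. W \<tau> j k) has_real_derivative
           ((\<Sum>l\<le>d. AQ d b \<gamma> \<nu> j l * W t l k) + (\<Sum>l\<le>d. W t j l * AQ d b \<gamma> \<nu> k l) + BBT j k))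
         (at t within {0..}))"

definition laplace_is :: "(real \<Rightarrow> real) \<Rightarrow> complex \<Rightarrow> complex \<Rightarrow> bool" where
  "laplace_is f s V \<longleftrightarrow> ((\<lambda>t. exp (- (s * of_real t)) * of_real (f t)) has_integral V) {0..}"

end

theory Submission
  imports Defs "HOL-Real_Asymp.Real_Asymp"
begin

(* Since A^Q is lower bidiagonal, entry (j,k) of the Lyapunov equation reads
     W'_jk = -2 nu W_jk + gamma beta_j W_(j-1)k + gamma beta_k W_j(k-1) + [j = k = 0],
   with beta_j = b for j = d and beta_j = 1 otherwise. The system is thus triangular in j + k, and
   induction on j + k (with uniqueness for u' = -2 nu u, u(0) = 0) gives
     W_jk(t) = C(j+k,k) beta_j beta_k gamma^(j+k) / (2 nu)^(j+k+1) * F_(j+k)(t),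
   where F_n is the distribution function of the Erlang law with n + 1 phases and rate 2 nu;
   Pascal's rule for the coefficients is exactly what makes this ansatz consistent.
   The Laplace transform of F_n is (2 nu)^(n+1) / (s (s + 2 nu)^(n+1)), obtained from
   int_0^oo t^l/l! e^(-p t) dt = 1/p^(l+1) and a geometric sum. *)

section \<open>Laplace transforms\<close>

lemma has_integral_atLeast_tendsto:
  fixes f :: "real \<Rightarrow> 'a::banach"
  assumes deriv: "\<And>x. x \<ge> a \<Longrightarrow> (F has_vector_derivative f x) (at x)"
    and lim: "(F \<longlongrightarrow> L) at_top"
  shows "(f has_integral (L - F a)) {a..}"
proof -
  have int: "(f has_integral (F y - F a)) {a..y}" if "y \<ge> a" for y
    using that by (intro fundamental_theorem_of_calculus) (auto intro: has_vector_derivative_at_within deriv)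
  have nb: "\<nexists>a' b'. {a..} = cbox a' (b'::real)"
  proof
    assume "\<exists>a' b'. {a..} = cbox a' (b'::real)"
    then obtain a' b' where "{a..} = cbox a' (b'::real)" by blast
    moreover have "max a b' + 1 \<in> {a..}" by simp
    ultimately show False by auto
  qed
  have main: "\<forall>e>0. \<exists>B>0. \<forall>a' b'. ball 0 B \<subseteq> cbox a' b' \<longrightarrow>
      (\<exists>z. ((\<lambda>x. if x \<in> {a..} then f x else 0) has_integral z) (cbox a' b') \<and> norm (z - (L - F a)) < e)"
  proof (intro allI impI)
    fix e :: real assume e: "e > 0"
    from lim e have "\<forall>\<^sub>F y in at_top. dist (F y) L < e" by (rule tendstoD)
    then obtain M where M: "\<And>y. y \<ge> M \<Longrightarrow> dist (F y) L < e" by (auto simp: eventually_at_top_linorder)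
    define B where "B = \<bar>a\<bar> + \<bar>M\<bar> + 1"
    show "\<exists>B>0. \<forall>a' b'. ball 0 B \<subseteq> cbox a' b' \<longrightarrow>
      (\<exists>z. ((\<lambda>x. if x \<in> {a..} then f x else 0) has_integral z) (cbox a' b') \<and> norm (z - (L - F a)) < e)"
    proof (intro exI[of _ B] conjI allI impI)
      show "B > 0" unfolding B_def by simp
      fix a' b' :: real assume sub: "ball 0 B \<subseteq> cbox a' b'"
      have "a' \<le> -(B - 1/2)" "b' \<ge> B - 1/2"
        using subsetD[OF sub, of "-(B - 1/2)"] subsetD[OF sub, of "B - 1/2"]
        by (auto simp: B_def)
      then have ab: "a' \<le> a" "b' \<ge> a" "b' \<ge> M" by (auto simp: B_def)
      have "((\<lambda>x. if x \<in> {a..b'} then f x else 0) has_integral (F b' - F a)) {a'..b'}"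
        using int[OF ab(2)] ab by (subst has_integral_restrict) auto
      then have "((\<lambda>x. if x \<in> {a..} then f x else 0) has_integral (F b' - F a)) (cbox a' b')"
        using has_integral_cong[of "{a'..b'}" "\<lambda>x. if x \<in> {a..b'} then f x else 0" "\<lambda>x. if x \<in> {a..} then f x else 0"] ab
        by (auto simp: cbox_interval)
      moreover have "norm ((F b' - F a) - (L - F a)) < e"
        using M[OF ab(3)] by (simp add: dist_norm)
      ultimately show "\<exists>z. ((\<lambda>x. if x \<in> {a..} then f x else 0) has_integral z) (cbox a' b') \<and> norm (z - (L - F a)) < e"
        by blast
    qed
  qed
  show ?thesis
    by (subst has_integral_alt, simp only: nb if_False) (rule main)
qed

fun power_exp_antideriv :: "complex \<Rightarrow> nat \<Rightarrow> complex \<Rightarrow> complex" where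
  "power_exp_antideriv p 0 z = - exp (- (p * z)) / p"
| "power_exp_antideriv p (Suc l) z =
     (power_exp_antideriv p l z - z ^ Suc l / fact (Suc l) * exp (- (p * z))) / p"

lemma has_field_derivative_power_div_fact:
  "((\<lambda>z. z ^ Suc l / fact (Suc l)) has_field_derivative (z ^ l / fact l :: 'a::real_normed_field)) (at z)"
proof -
  have "((\<lambda>z. z ^ Suc l / fact (Suc l)) has_field_derivative of_nat (Suc l) * z ^ l / fact (Suc l)) (at z)"
    using DERIV_cdivide[OF DERIV_power[OF DERIV_ident, where n="Suc l" and x=z and s=UNIV], of "fact (Suc l)"]
    by (simp del: power_Suc fact_Suc of_nat_Suc)
  moreover have "of_nat (Suc l) * z ^ l / fact (Suc l) = (z ^ l / fact l :: 'a)"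
    by (simp del: of_nat_Suc add: fact_Suc[of l])
  ultimately show ?thesis by simp
qed

lemma has_field_derivative_power_exp_antideriv:
  assumes "p \<noteq> 0"
  shows "(power_exp_antideriv p l has_field_derivative z ^ l / fact l * exp (- (p * z))) (at z)"
proof (induction l)
  case 0
  show ?case using assms by (auto intro!: derivative_eq_intros)
next
  case (Suc l)
  have "((\<lambda>z. z ^ Suc l / fact (Suc l) * exp (- (p * z))) has_field_derivative
      z ^ l / fact l * exp (- (p * z)) - p * (z ^ Suc l / fact (Suc l) * exp (- (p * z)))) (at z)"
    by (rule derivative_eq_intros has_field_derivative_power_div_fact refl | simp)+
  from DERIV_cdivide[OF DERIV_diff[OF Suc this], of p]
  show ?case
    using assms by (simp del: power_Suc fact_Suc add: field_simps)
qed

lemma power_exp_antideriv_at_0: "power_exp_antideriv p l 0 = - 1 / p ^ Suc l"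
  by (induction l) auto

lemma power_mult_exp_tendsto_0:
  fixes c :: real
  assumes "c > 0"
  shows "((\<lambda>t. t ^ l * exp (- c * t)) \<longlongrightarrow> 0) at_top"
  using assms by real_asymp

lemma power_exp_tendsto_0:
  assumes "Re p > 0"
  shows "((\<lambda>t. of_real t ^ l / fact l * exp (- (p * of_real t))) \<longlongrightarrow> 0) at_top"
proof (rule tendsto_norm_zero_cancel)
  have "\<forall>\<^sub>F t in at_top.
      t ^ l * exp (- Re p * t) / fact l = norm (of_real t ^ l / fact l * exp (- (p * of_real t)))"
    using eventually_ge_at_top[of "0::real"]
    by eventually_elim (simp add: norm_mult norm_divide norm_power)
  moreover have "((\<lambda>t. t ^ l * exp (- Re p * t) / fact l) \<longlongrightarrow> 0) at_top"
    using tendsto_divide_zero[OF power_mult_exp_tendsto_0[of "Re p" l]] assms by simp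
  ultimately show "((\<lambda>t. norm (of_real t ^ l / fact l * exp (- (p * of_real t)))) \<longlongrightarrow> 0) at_top"
    by (rule tendsto_cong[THEN iffD1])
qed

lemma power_exp_antideriv_tendsto_0:
  assumes "Re p > 0"
  shows "((\<lambda>t. power_exp_antideriv p l (of_real t)) \<longlongrightarrow> 0) at_top"
proof -
  have "p \<noteq> 0" using assms by auto
  show ?thesis
  proof (induction l)
    case 0
    have "((\<lambda>t. - (of_real t ^ 0 / fact 0 * exp (- (p * of_real t))) / p) \<longlongrightarrow> - 0 / p) at_top"
      by (intro tendsto_intros power_exp_tendsto_0 assms \<open>p \<noteq> 0\<close>)
    then show ?case by simp
  next
    case (Suc l)
    have "((\<lambda>t. (power_exp_antideriv p l (of_real t)
        - of_real t ^ Suc l / fact (Suc l) * exp (- (p * of_real t))) / p) \<longlongrightarrow> (0 - 0) / p) at_top"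
      by (intro tendsto_intros Suc power_exp_tendsto_0 assms \<open>p \<noteq> 0\<close>)
    then show ?case by simp
  qed
qed

lemma has_integral_power_exp:
  assumes "Re p > 0"
  shows "((\<lambda>t. of_real t ^ l / fact l * exp (- (p * of_real t))) has_integral 1 / p ^ Suc l) {0..}"
proof -
  have "p \<noteq> 0" using assms by auto
  have "((\<lambda>t. of_real t ^ l / fact l * exp (- (p * of_real t))) has_integral
      0 - power_exp_antideriv p l (of_real 0)) {0..}"
    by (intro has_integral_atLeast_tendsto power_exp_antideriv_tendsto_0 assms
        has_vector_derivative_real_field has_field_derivative_power_exp_antideriv \<open>p \<noteq> 0\<close>)
  then show ?thesis by (simp add: power_exp_antideriv_at_0)
qed

lemma laplace_is_power_exp:
  assumes "Re s + a > 0"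
  shows "laplace_is (\<lambda>t. t ^ l / fact l * exp (- a * t)) s (1 / (s + of_real a) ^ Suc l)"
proof -
  have "exp (- (s * of_real t)) * of_real (exp (- a * t)) = exp (- ((s + of_real a) * of_real t))"
    for t :: real
    unfolding exp_of_real[symmetric] mult_exp_exp by (simp add: algebra_simps)
  then have "(\<lambda>t. exp (- (s * of_real t)) * of_real (t ^ l / fact l * exp (- a * t)))
      = (\<lambda>t. of_real t ^ l / fact l * exp (- ((s + of_real a) * of_real t)))"
    by (simp add: fun_eq_iff mult_ac)
  then show ?thesis
    unfolding laplace_is_def using has_integral_power_exp[of "s + of_real a" l] assms by simp
qed

lemma laplace_is_const: "Re s > 0 \<Longrightarrow> laplace_is (\<lambda>t. 1) s (1 / s)"
  using laplace_is_power_exp[of s 0 0] by simp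

lemma laplace_is_cmult:
  assumes "laplace_is f s V"
  shows "laplace_is (\<lambda>t. c * f t) s (of_real c * V)"
proof -
  have "(\<lambda>t. exp (- (s * of_real t)) * of_real (c * f t))
      = (\<lambda>t. of_real c * (exp (- (s * of_real t)) * of_real (f t)))"
    by (simp add: fun_eq_iff mult.left_commute)
  with has_integral_mult_right[OF assms[unfolded laplace_is_def], of "of_real c"] show ?thesis
    unfolding laplace_is_def by simp
qed

lemma laplace_is_diff:
  assumes "laplace_is f s V" "laplace_is g s U"
  shows "laplace_is (\<lambda>t. f t - g t) s (V - U)"
  using has_integral_diff[OF assms[unfolded laplace_is_def]]
  unfolding laplace_is_def of_real_diff right_diff_distrib .

lemma laplace_is_sum:
  "finite I \<Longrightarrow> (\<And>i. i \<in> I \<Longrightarrow> laplace_is (f i) s (V i))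
    \<Longrightarrow> laplace_is (\<lambda>t. \<Sum>i\<in>I. f i t) s (\<Sum>i\<in>I. V i)"
  unfolding laplace_is_def of_real_sum sum_distrib_left by (rule has_integral_sum)

lemma laplace_is_cong:
  assumes "\<And>t. t \<ge> 0 \<Longrightarrow> f t = g t"
  shows "laplace_is f s V \<longleftrightarrow> laplace_is g s V"
  unfolding laplace_is_def using assms by (intro has_integral_cong) auto

lemma inverse_minus_geometric_sum:
  fixes s p :: "'a::field"
  assumes "s \<noteq> 0" "p \<noteq> 0"
  shows "1 / s - (\<Sum>l\<le>n. (p - s) ^ l / p ^ Suc l) = (p - s) ^ Suc n / (s * p ^ Suc n)"
proof (induction n)
  case 0
  show ?case using assms by (simp add: field_simps)
next
  case (Suc n)
  have "1 / s - (\<Sum>l\<le>Suc n. (p - s) ^ l / p ^ Suc l)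
      = (p - s) ^ Suc n / (s * p ^ Suc n) - (p - s) ^ Suc n / p ^ Suc (Suc n)"
    using Suc.IH by simp
  also have "\<dots> = (p - s) ^ Suc (Suc n) / (s * p ^ Suc (Suc n))"
    using assms by (simp add: field_simps)
  finally show ?case .
qed

section \<open>The Erlang distribution function\<close>

definition erlang_cdf :: "real \<Rightarrow> nat \<Rightarrow> real \<Rightarrow> real" where
  "erlang_cdf a n t = 1 - exp (- a * t) * (\<Sum>l\<le>n. (a * t) ^ l / fact l)"

lemma erlang_cdf_at_0 [simp]: "erlang_cdf a n 0 = 0"
  unfolding erlang_cdf_def by (induction n) auto

lemma erlang_cdf_Suc:
  "erlang_cdf a (Suc n) t = erlang_cdf a n t - exp (- a * t) * (a * t) ^ Suc n / fact (Suc n)"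
  unfolding erlang_cdf_def by (simp add: algebra_simps)

lemma has_real_derivative_erlang_cdf_density:
  "(erlang_cdf a n has_real_derivative a * (exp (- a * t) * (a * t) ^ n / fact n)) (at t)"
proof (induction n)
  case 0
  show ?case unfolding erlang_cdf_def by (auto intro!: derivative_eq_intros)
next
  case (Suc n)
  have "((\<lambda>t. (a * t) ^ Suc n / fact (Suc n)) has_real_derivative (a * t) ^ n / fact n * a) (at t)"
    using DERIV_chain2[OF has_field_derivative_power_div_fact DERIV_cmult_Id] .
  from DERIV_mult[OF DERIV_chain2[OF DERIV_exp DERIV_cmult_Id[of "- a"]] this]
  have "((\<lambda>t. exp (- a * t) * ((a * t) ^ Suc n / fact (Suc n))) has_real_derivative
      a * (exp (- a * t) * (a * t) ^ n / fact n) - a * (exp (- a * t) * (a * t) ^ Suc n / fact (Suc n))) (at t)"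
    by (simp add: algebra_simps)
  from DERIV_diff[OF Suc this] show ?case
    unfolding erlang_cdf_Suc[abs_def] by (simp add: algebra_simps)
qed

lemma has_real_derivative_erlang_cdf:
  "(erlang_cdf a n has_real_derivative
     a * ((if n = 0 then 1 else erlang_cdf a (n - 1) t) - erlang_cdf a n t)) (at t)"
proof (cases n)
  case 0
  then show ?thesis using has_real_derivative_erlang_cdf_density[of a 0 t] by (simp add: erlang_cdf_def)
next
  case (Suc m)
  then show ?thesis using has_real_derivative_erlang_cdf_density[of a n t] by (simp add: erlang_cdf_Suc)
qed

lemma laplace_is_erlang_cdf:
  assumes "a > 0" "Re s > 0"
  shows "laplace_is (erlang_cdf a n) s (of_real a ^ Suc n / (s * (s + of_real a) ^ Suc n))"
proof -
  have "erlang_cdf a n = (\<lambda>t. 1 - (\<Sum>l\<le>n. a ^ l * (t ^ l / fact l * exp (- a * t))))"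
    unfolding erlang_cdf_def sum_distrib_left by (simp add: fun_eq_iff power_mult_distrib mult_ac)
  moreover have "of_real a ^ Suc n / (s * (s + of_real a) ^ Suc n)
      = 1 / s - (\<Sum>l\<le>n. of_real (a ^ l) * (1 / (s + of_real a) ^ Suc l))"
    using inverse_minus_geometric_sum[of s "s + of_real a" n] assms by (auto simp: complex_eq_iff)
  ultimately show ?thesis
    using assms
    by (simp only:) (intro laplace_is_diff laplace_is_const laplace_is_sum laplace_is_cmult
        laplace_is_power_exp; simp)
qed

section \<open>The Lyapunov equation on the quotient path\<close>

(* The edge (j - 1) -> j of the quotient path has weight gamma * balloon_weight d b j. *)
definition balloon_weight :: "nat \<Rightarrow> nat \<Rightarrow> nat \<Rightarrow> real" where
  "balloon_weight d b j = (if j = d then real b else 1)"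

lemma sum_AQ_mult:
  assumes "d \<ge> 1" "j \<le> d"
  shows "(\<Sum>l\<le>d. AQ d b \<gamma> \<nu> j l * x l)
    = - \<nu> * x j + (if j = 0 then 0 else \<gamma> * balloon_weight d b j * x (j - 1))"
proof -
  have "(\<Sum>l\<le>d. AQ d b \<gamma> \<nu> j l * x l) = (\<Sum>l\<le>d. (if l = j then - \<nu> * x j else 0)
      + (if j \<noteq> 0 \<and> l = j - 1 then \<gamma> * balloon_weight d b j * x (j - 1) else 0))"
    using assms by (intro sum.cong) (auto simp: AQ_def balloon_weight_def)
  also have "\<dots> = - \<nu> * x j + (if j = 0 then 0 else \<gamma> * balloon_weight d b j * x (j - 1))"
    using assms by (simp add: sum.distrib)
  finally show ?thesis .
qed

(* Only entries of X with smaller j + k occur here; this makes the Lyapunov system triangular. *)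
definition lyap_forcing :: "nat \<Rightarrow> nat \<Rightarrow> real \<Rightarrow> (nat \<Rightarrow> nat \<Rightarrow> real) \<Rightarrow> nat \<Rightarrow> nat \<Rightarrow> real" where
  "lyap_forcing d b \<gamma> X j k =
     (if j = 0 then 0 else \<gamma> * balloon_weight d b j * X (j - 1) k)
     + (if k = 0 then 0 else \<gamma> * balloon_weight d b k * X j (k - 1)) + BBT j k"

lemma lyap_rhs_eq:
  assumes "d \<ge> 1" "j \<le> d" "k \<le> d"
  shows "(\<Sum>l\<le>d. AQ d b \<gamma> \<nu> j l * X l k) + (\<Sum>l\<le>d. X j l * AQ d b \<gamma> \<nu> k l) + BBT j k
    = - 2 * \<nu> * X j k + lyap_forcing d b \<gamma> X j k"
  using sum_AQ_mult[OF assms(1,2), of b \<gamma> \<nu> "\<lambda>l. X l k"]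
    sum_AQ_mult[OF assms(1,3), of b \<gamma> \<nu> "X j"]
  by (simp add: lyap_forcing_def mult.commute)

definition gram_coeff :: "nat \<Rightarrow> nat \<Rightarrow> nat \<Rightarrow> nat \<Rightarrow> real" where
  "gram_coeff d b j k = real ((j + k) choose k) * balloon_weight d b j * balloon_weight d b k"

lemma gram_coeff_pascal:
  assumes "j \<le> d" "k \<le> d" "j + k > 0"
  shows "gram_coeff d b j k
    = (if j = 0 then 0 else balloon_weight d b j * gram_coeff d b (j - 1) k)
      + (if k = 0 then 0 else balloon_weight d b k * gram_coeff d b j (k - 1))"
proof (cases j)
  case 0
  with assms show ?thesis by (auto simp: gram_coeff_def balloon_weight_def)
next
  case (Suc i)
  show ?thesis
  proof (cases k)
    case 0
    with assms Suc show ?thesis by (auto simp: gram_coeff_def balloon_weight_def)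
  next
    case (Suc m)
    have "(j + k) choose k = ((i + k) choose k) + ((j + m) choose m)"
      using \<open>j = Suc i\<close> Suc by (simp add: add.commute)
    then show ?thesis
      using assms \<open>j = Suc i\<close> Suc by (simp add: gram_coeff_def balloon_weight_def algebra_simps)
  qed
qed

definition lyap_profile :: "real \<Rightarrow> real \<Rightarrow> nat \<Rightarrow> real \<Rightarrow> real" where
  "lyap_profile \<gamma> \<nu> n t = \<gamma> ^ n / (2 * \<nu>) ^ Suc n * erlang_cdf (2 * \<nu>) n t"

lemma has_real_derivative_lyap_profile:
  assumes "\<nu> > 0"
  shows "(lyap_profile \<gamma> \<nu> n has_real_derivative
    (if n = 0 then 1 else \<gamma> * lyap_profile \<gamma> \<nu> (n - 1) t) - 2 * \<nu> * lyap_profile \<gamma> \<nu> n t) (at t)"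
proof -
  have "lyap_profile \<gamma> \<nu> n = (\<lambda>t. \<gamma> ^ n / (2 * \<nu>) ^ Suc n * erlang_cdf (2 * \<nu>) n t)"
    by (simp add: fun_eq_iff lyap_profile_def)
  moreover have "\<gamma> ^ n / (2 * \<nu>) ^ Suc n
      * (2 * \<nu> * ((if n = 0 then 1 else erlang_cdf (2 * \<nu>) (n - 1) t) - erlang_cdf (2 * \<nu>) n t))
    = (if n = 0 then 1 else \<gamma> * lyap_profile \<gamma> \<nu> (n - 1) t) - 2 * \<nu> * lyap_profile \<gamma> \<nu> n t"
    using assms by (cases n) (simp_all add: lyap_profile_def field_simps)
  ultimately show ?thesis
    using DERIV_cmult[OF has_real_derivative_erlang_cdf, of "\<gamma> ^ n / (2 * \<nu>) ^ Suc n" "2 * \<nu>" n t]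
    by simp
qed

definition lyap_solution :: "nat \<Rightarrow> nat \<Rightarrow> real \<Rightarrow> real \<Rightarrow> real \<Rightarrow> nat \<Rightarrow> nat \<Rightarrow> real" where
  "lyap_solution d b \<gamma> \<nu> t j k = gram_coeff d b j k * lyap_profile \<gamma> \<nu> (j + k) t"

lemma has_real_derivative_lyap_solution:
  assumes "d \<ge> 1" "\<nu> > 0" "j \<le> d" "k \<le> d"
  shows "((\<lambda>\<tau>. lyap_solution d b \<gamma> \<nu> \<tau> j k) has_real_derivative
    - 2 * \<nu> * lyap_solution d b \<gamma> \<nu> t j k + lyap_forcing d b \<gamma> (lyap_solution d b \<gamma> \<nu> t) j k) (at t)"
proof -
  have "gram_coeff d b j k * (if j + k = 0 then 1 else \<gamma> * lyap_profile \<gamma> \<nu> (j + k - 1) t)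
      = lyap_forcing d b \<gamma> (lyap_solution d b \<gamma> \<nu> t) j k"
  proof (cases "j + k = 0")
    case True
    with assms show ?thesis by (simp add: gram_coeff_def balloon_weight_def lyap_forcing_def BBT_def)
  next
    case False
    have "j \<noteq> 0 \<Longrightarrow> j - 1 + k = j + k - 1" "k \<noteq> 0 \<Longrightarrow> j + (k - 1) = j + k - 1" by auto
    with False show ?thesis using gram_coeff_pascal[OF assms(3,4)]
      by (auto simp: lyap_forcing_def lyap_solution_def BBT_def algebra_simps)
  qed
  with DERIV_cmult[OF has_real_derivative_lyap_profile[OF assms(2)], of "gram_coeff d b j k" \<gamma> "j + k" t]
  show ?thesis by (simp add: lyap_solution_def algebra_simps)
qed

lemma linear_ode_zero:
  fixes u :: "real \<Rightarrow> real"
  assumes "u 0 = 0" "\<And>t. t \<ge> 0 \<Longrightarrow> (u has_real_derivative (c * u t)) (at t within {0..})" "t \<ge> 0"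
  shows "u t = 0"
proof -
  define v where "v t = exp (- c * t) * u t" for t
  have "(v has_real_derivative 0) (at x within {0..})" if "x \<in> {0..}" for x
  proof -
    have "(v has_real_derivative (exp (- c * x) * (- c) * u x + exp (- c * x) * (c * u x))) (at x within {0..})"
      unfolding v_def using assms(2)[of x] that
      by (auto intro!: derivative_eq_intros)
    then show ?thesis by (simp add: algebra_simps)
  qed
  then obtain k where k: "\<And>x. x \<in> {0..} \<Longrightarrow> v x = k"
    using has_field_derivative_zero_constant[of "{0::real..}" v] by auto
  have "k = 0" using k[of 0] assms(1) by (simp add: v_def)
  then have "v t = 0" using k[of t] assms(3) by simp
  then show ?thesis by (simp add: v_def)
qed

lemma solves_lyap_eq_lyap_solution:
  assumes "d \<ge> 1" "\<nu> > 0" "solves_lyap d b \<gamma> \<nu> W" "j \<le> d" "k \<le> d" "t \<ge> 0"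
  shows "W t j k = lyap_solution d b \<gamma> \<nu> t j k"
  using assms(4-6)
proof (induction "j + k" arbitrary: j k t rule: less_induct)
  case less
  have forcing_eq: "lyap_forcing d b \<gamma> (W \<tau>) j k = lyap_forcing d b \<gamma> (lyap_solution d b \<gamma> \<nu> \<tau>) j k"
    if "\<tau> \<ge> 0" for \<tau>
  proof -
    have "W \<tau> (j - 1) k = lyap_solution d b \<gamma> \<nu> \<tau> (j - 1) k" if "j \<noteq> 0"
      using less.hyps[of "j - 1" k \<tau>] less.prems \<open>\<tau> \<ge> 0\<close> that by simp
    moreover have "W \<tau> j (k - 1) = lyap_solution d b \<gamma> \<nu> \<tau> j (k - 1)" if "k \<noteq> 0"
      using less.hyps[of j "k - 1" \<tau>] less.prems \<open>\<tau> \<ge> 0\<close> that by simp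
    ultimately show ?thesis by (simp add: lyap_forcing_def cong: if_cong)
  qed
  have W_deriv: "((\<lambda>\<tau>. W \<tau> j k) has_real_derivative
      - 2 * \<nu> * W \<tau> j k + lyap_forcing d b \<gamma> (W \<tau>) j k) (at \<tau> within {0..})" if "\<tau> \<ge> 0" for \<tau>
  proof -
    have "((\<lambda>\<tau>. W \<tau> j k) has_real_derivative (\<Sum>l\<le>d. AQ d b \<gamma> \<nu> j l * W \<tau> l k)
        + (\<Sum>l\<le>d. W \<tau> j l * AQ d b \<gamma> \<nu> k l) + BBT j k) (at \<tau> within {0..})"
      using assms(3) less.prems(1,2) that unfolding solves_lyap_def by blast
    then show ?thesis unfolding lyap_rhs_eq[OF assms(1) less.prems(1,2)] .
  qed
  have "((\<lambda>\<tau>. W \<tau> j k - lyap_solution d b \<gamma> \<nu> \<tau> j k) has_real_derivative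
      - 2 * \<nu> * (W \<tau> j k - lyap_solution d b \<gamma> \<nu> \<tau> j k)) (at \<tau> within {0..})" if "\<tau> \<ge> 0" for \<tau>
    using DERIV_diff[OF W_deriv[OF that] has_field_derivative_at_within[OF
        has_real_derivative_lyap_solution[OF assms(1,2) less.prems(1,2), where b=b and \<gamma>=\<gamma>]]]
      forcing_eq[OF that]
    by (simp add: algebra_simps)
  moreover have "W 0 j k - lyap_solution d b \<gamma> \<nu> 0 j k = 0"
    using assms(3) less.prems by (simp add: solves_lyap_def lyap_solution_def lyap_profile_def)
  ultimately have "W t j k - lyap_solution d b \<gamma> \<nu> t j k = 0"
    using linear_ode_zero[of "\<lambda>\<tau>. W \<tau> j k - lyap_solution d b \<gamma> \<nu> \<tau> j k"] less.prems by blast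
  then show ?case by simp
qed

lemma laplace_is_lyap_entry:
  assumes "d \<ge> 1" "\<nu> > 0" "solves_lyap d b \<gamma> \<nu> W" "j \<le> d" "k \<le> d" "Re s > 0"
  shows "laplace_is (\<lambda>t. W t j k) s (of_real (gram_coeff d b j k) / (s * (s + 2 * of_real \<nu>))
    * (of_real \<gamma> / (s + 2 * of_real \<nu>)) ^ (j + k))"
proof -
  define n where "n = j + k"
  define c where "c = gram_coeff d b j k * (\<gamma> ^ n / (2 * \<nu>) ^ Suc n)"
  define q where "q = s + 2 * of_real \<nu>"
  have "s \<noteq> 0" "q \<noteq> 0"
    using assms(2,6) by (auto simp: q_def complex_eq_iff)
  have "c * (2 * \<nu>) ^ Suc n = gram_coeff d b j k * \<gamma> ^ n"
    using assms(2) by (simp add: c_def)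
  then have "of_real c * of_real (2 * \<nu>) ^ Suc n = of_real (gram_coeff d b j k) * (of_real \<gamma> ^ n :: complex)"
    by (metis of_real_mult of_real_power)
  then have "of_real c * (of_real (2 * \<nu>) ^ Suc n / (s * q ^ Suc n))
      = of_real (gram_coeff d b j k) / (s * q) * (of_real \<gamma> / q) ^ n"
    using \<open>s \<noteq> 0\<close> \<open>q \<noteq> 0\<close> by (simp add: power_divide field_simps)
  then have transform_eq: "of_real c * (of_real (2 * \<nu>) ^ Suc n / (s * (s + of_real (2 * \<nu>)) ^ Suc n))
    = of_real (gram_coeff d b j k) / (s * (s + 2 * of_real \<nu>)) * (of_real \<gamma> / (s + 2 * of_real \<nu>)) ^ n"
    by (simp add: q_def)
  have "laplace_is (\<lambda>t. c * erlang_cdf (2 * \<nu>) n t) s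
      (of_real c * (of_real (2 * \<nu>) ^ Suc n / (s * (s + of_real (2 * \<nu>)) ^ Suc n)))"
    using assms by (intro laplace_is_cmult laplace_is_erlang_cdf) auto
  moreover have "W t j k = c * erlang_cdf (2 * \<nu>) n t" if "t \<ge> 0" for t
    using solves_lyap_eq_lyap_solution[OF assms(1-5) that]
    by (simp add: lyap_solution_def lyap_profile_def n_def c_def)
  ultimately have "laplace_is (\<lambda>t. W t j k) s
      (of_real c * (of_real (2 * \<nu>) ^ Suc n / (s * (s + of_real (2 * \<nu>)) ^ Suc n)))"
    by (subst laplace_is_cong)
  then show ?thesis
    unfolding n_def[symmetric] transform_eq .
qed

theorem mainTheorem3:
  fixes d b :: nat and \<gamma> \<nu> :: real and W :: "real \<Rightarrow> nat \<Rightarrow> nat \<Rightarrow> real"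
  assumes "d \<ge> 2" and "b \<ge> 1" and "\<gamma> > 0" and "\<nu> > 0"
    and "solves_lyap d b \<gamma> \<nu> W"
  shows
    "(\<forall>j<d. \<forall>k<d. \<forall>s. Re s > 0 \<longrightarrow>
        laplace_is (\<lambda>t. W t j k) s
          (1 / (s * (s + 2 * of_real \<nu>)) * (of_real \<gamma> / (s + 2 * of_real \<nu>)) ^ (j + k)
             * of_nat ((j + k) choose k)))
     \<and> (\<forall>j<d. \<forall>k<d. \<forall>t\<ge>0.
        W t j k = 1 / (2 * \<nu>) * (\<gamma> / (2 * \<nu>)) ^ (j + k) * real ((j + k) choose k)
          * (1 - exp (- 2 * \<nu> * t) * (\<Sum>l\<le>j + k. (2 * \<nu> * t) ^ l / fact l)))
     \<and> (\<forall>j<d. \<forall>s. Re s > 0 \<longrightarrow>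
        laplace_is (\<lambda>t. W t d j) s
          (of_nat b / (s * (s + 2 * of_real \<nu>)) * (of_real \<gamma> / (s + 2 * of_real \<nu>)) ^ (d + j)
             * of_nat ((d + j) choose d))
        \<and> laplace_is (\<lambda>t. W t j d) s
          (of_nat b / (s * (s + 2 * of_real \<nu>)) * (of_real \<gamma> / (s + 2 * of_real \<nu>)) ^ (d + j)
             * of_nat ((d + j) choose d)))
     \<and> (\<forall>s. Re s > 0 \<longrightarrow>
        laplace_is (\<lambda>t. W t d d) s
          ((of_nat b)\<^sup>2 / (s * (s + 2 * of_real \<nu>)) * (of_real \<gamma> / (s + 2 * of_real \<nu>)) ^ (2 * d)
             * of_nat ((2 * d) choose d)))"
proof -
  have d: "d \<ge> 1" using assms(1) by simp
  note entry = laplace_is_lyap_entry[OF d assms(4,5)]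
  note explicit = solves_lyap_eq_lyap_solution[OF d assms(4,5)]
  have gram_lt: "gram_coeff d b j k = real ((j + k) choose k)" if "j < d" "k < d" for j k
    using that by (simp add: gram_coeff_def balloon_weight_def)
  have gram_d: "gram_coeff d b d j = real b * real ((d + j) choose d)"
    "gram_coeff d b j d = real b * real ((d + j) choose d)" if "j < d" for j
    using that binomial_symmetric[of j "d + j"] by (simp_all add: gram_coeff_def balloon_weight_def add.commute)
  have gram_dd: "gram_coeff d b d d = (real b)\<^sup>2 * real ((2 * d) choose d)"
    by (simp add: gram_coeff_def balloon_weight_def mult_2 power2_eq_square)
  show ?thesis
    apply (intro conjI allI impI)
    subgoal for j k s using entry[of j k s] by (simp add: gram_lt mult.commute)
    subgoal for j k t using explicit[of j k t]
      by (simp add: gram_lt lyap_solution_def lyap_profile_def erlang_cdf_def power_divide)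
    subgoal for j s using entry[of d j s] by (simp add: gram_d mult_ac)
    subgoal for j s using entry[of j d s] by (simp add: gram_d add.commute mult_ac)
    subgoal for s using entry[of d d s, unfolded mult_2[symmetric]] by (simp add: gram_dd mult_ac)
    done
qed

end
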